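(* Let $\mathcal{H}=\mathbb{C}^{d_1}$ with $d_1$ odd and $\mathcal{K}=\mathbb{C}^{d_2}$. Then every minimizer $U$ of $$\min\Big\{\frac1{d_1d_2}\operatorname{tr}\big[U\,\overline U^{T_2}\big]:\ U\in\mathcal{B}(\mathcal{H}\otimes\mathcal{K})\text{ unitary}\Big\}$$ has the property that $U\,\overline U^{T_2}$ is Hermitian.
   Context: The partial transpose $T_2$ is taken with respect to a fixed product basis, defined by linear extension of $(X\otimes Y)^{T_2}=X\otimes Y^T$; $\overline U$ is the entrywise complex conjugate, and $\overline U^{T_2}=(\overline U)^{T_2}$. *)

theory Defs
  imports "HOL-Analysis.Analysis"
begin

text \<open>Operators on H \<otimes> K = C^d1 \<otimes> C^d2, with the product basis indexed by pairs
  (i,k) in 'a \<times> 'b, where CARD('a) = d1 and CARD('b) = d2.\<close>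

definition entry_conj :: "complex^'n^'m \<Rightarrow> complex^'n^'m" where
  "entry_conj A = (\<chi> i j. cnj (A $ i $ j))"

definition conj_transpose :: "complex^'n^'m \<Rightarrow> complex^'m^'n" where
  "conj_transpose A = transpose (entry_conj A)"

definition unitary_mat :: "complex^'n^'n \<Rightarrow> bool" where
  "unitary_mat U \<longleftrightarrow> conj_transpose U ** U = mat 1 \<and> U ** conj_transpose U = mat 1"

definition hermitian_mat :: "complex^'n^'n \<Rightarrow> bool" where
  "hermitian_mat A \<longleftrightarrow> conj_transpose A = A"

text \<open>Partial transpose on the second tensor factor: linear extension of
  (X \<otimes> Y)^T2 = X \<otimes> Y^T, i.e. entry ((i,k),(j,l)) of X^T2 is entry ((i,l),(j,k)) of X.\<close>
definition partial_transpose2 :: "complex^('a::finite \<times> 'b::finite)^('a \<times> 'b) \<Rightarrow> complex^('a \<times> 'b)^('a \<times> 'b)" where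
  "partial_transpose2 X = (\<chi> p q. X $ (fst p, snd q) $ (fst q, snd p))"

text \<open>The objective (1/(d1 d2)) tr[U conj(U)^T2]; this trace is always real, so we take Re.\<close>
definition objective :: "complex^('a::finite \<times> 'b::finite)^('a \<times> 'b) \<Rightarrow> real" where
  "objective U = Re (trace (U ** partial_transpose2 (entry_conj U))) / (real CARD('a) * real CARD('b))"

end

theory Submission imports Defs begin

text \<open>The Hermiticity of \<open>W = U \<overline>U\<^sup>T\<^sup>2\<close> is the first-order optimality condition of the
  minimisation. The objective is the real quadratic form
  \<open>V \<mapsto> Re \<beta>(V,V)\<close> of the form \<open>\<beta>(A,B) = tr(A \<overline>B\<^sup>T\<^sup>2)\<close>, which satisfies
  \<open>\<beta>(B,A) = \<overline>\<beta>(A,B)\<close>. For anti-Hermitian \<open>X\<close> with \<open>X\<^sup>3 = -X\<close> the curve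
  \<open>exp(tX) = 1 + sin t X + (1 - cos t) X\<^sup>2\<close> consists of unitaries, and differentiating the
  objective along \<open>exp(tX) U\<close> at \<open>t = 0\<close> gives \<open>Re tr(XW) = 0\<close>. Taking for \<open>X\<close> the matrices
  \<open>a E\<^sub>p\<^sub>q - \<overline>a E\<^sub>q\<^sub>p\<close> with \<open>|a| = 1\<close> and \<open>\<i> E\<^sub>p\<^sub>p\<close> then reads off \<open>W\<^sub>q\<^sub>p = \<overline>W\<^sub>p\<^sub>q\<close>.\<close>

lemma matrix_add_rdistrib: "((A::'a::semiring_1^'n^'m) + B) ** C = A ** C + B ** C"
  by (vector matrix_matrix_mult_def sum.distrib[symmetric] field_simps)

lemma matrix_mul_uminus_left: "(- A::'a::ring_1^'n^'m) ** B = - (A ** B)"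
  by (vector matrix_matrix_mult_def sum_negf[symmetric])

lemma matrix_mul_uminus_right: "(A::'a::ring_1^'n^'m) ** (- B) = - (A ** B)"
  by (vector matrix_matrix_mult_def sum_negf[symmetric])

lemma entry_conj_component [simp]: "entry_conj A $ i $ j = cnj (A $ i $ j)"
  by (simp add: entry_conj_def)

lemma conj_transpose_component [simp]: "conj_transpose A $ i $ j = cnj (A $ j $ i)"
  by (simp add: conj_transpose_def transpose_def)

lemma conj_transpose_mult: "conj_transpose (A ** B) = conj_transpose B ** conj_transpose A"
  by (simp add: vec_eq_iff matrix_matrix_mult_def mult.commute)

lemma conj_transpose_add: "conj_transpose (A + B) = conj_transpose A + conj_transpose B"
  by (simp add: vec_eq_iff)

lemma conj_transpose_scaleR: "conj_transpose (r *\<^sub>R A) = r *\<^sub>R conj_transpose A"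
  by (simp add: vec_eq_iff scaleR_conv_of_real[where 'a=complex])

lemma conj_transpose_mat_1: "conj_transpose (mat 1) = mat 1"
  by (simp add: vec_eq_iff mat_def)

lemma unitary_mat_mult:
  assumes "unitary_mat Q" and "unitary_mat U"
  shows "unitary_mat (Q ** U)"
  using assms unfolding unitary_mat_def conj_transpose_mult
  by (metis matrix_mul_assoc matrix_mul_lid)

lemma rotation_mult_inverse_rotation:
  fixes X :: "complex^'n^'n"
  assumes cube: "X ** X ** X = - X" and circle: "s\<^sup>2 + c\<^sup>2 = 2 * c"
  shows "(mat 1 + s *\<^sub>R X + c *\<^sub>R (X ** X)) ** (mat 1 + (- s) *\<^sub>R X + c *\<^sub>R (X ** X)) = mat 1"
proof -
  define Y where "Y = X ** X"
  have XY: "X ** Y = - X" and YX: "Y ** X = - X" and YY: "Y ** Y = - Y"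
    using cube by (simp_all add: Y_def matrix_mul_assoc matrix_mul_uminus_left)
  have "(mat 1 + s *\<^sub>R X + c *\<^sub>R Y) ** (mat 1 + (- s) *\<^sub>R X + c *\<^sub>R Y)
      = mat 1 + (2 * c - s\<^sup>2 - c\<^sup>2) *\<^sub>R Y"
    unfolding matrix_add_ldistrib matrix_add_rdistrib matrix_scalar_ac
      scalar_matrix_assoc[symmetric] XY YX YY matrix_mul_lid matrix_mul_rid
    by (simp add: vec_eq_iff algebra_simps power2_eq_square Y_def[symmetric]
        scaleR_conv_of_real[where 'a=complex])
  with circle show ?thesis
    by (simp add: Y_def)
qed

lemma unitary_mat_rotation:
  fixes X :: "complex^'n^'n"
  assumes skew: "conj_transpose X = - X" and cube: "X ** X ** X = - X"
  shows "unitary_mat (mat 1 + sin t *\<^sub>R X + (1 - cos t) *\<^sub>R (X ** X))"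
proof -
  have circle: "s\<^sup>2 + (1 - cos t)\<^sup>2 = 2 * (1 - cos t)" if "s\<^sup>2 = (sin t)\<^sup>2" for s
    using that sin_cos_squared_add[of t] by (simp add: power2_eq_square algebra_simps)
  have "conj_transpose (X ** X) = X ** X"
    by (simp add: conj_transpose_mult skew matrix_mul_uminus_left matrix_mul_uminus_right)
  then have "conj_transpose (mat 1 + sin t *\<^sub>R X + (1 - cos t) *\<^sub>R (X ** X))
      = mat 1 + (- sin t) *\<^sub>R X + (1 - cos t) *\<^sub>R (X ** X)"
    by (simp add: conj_transpose_add conj_transpose_scaleR conj_transpose_mat_1 skew)
  then show ?thesis
    unfolding unitary_mat_def
    using rotation_mult_inverse_rotation[OF cube circle]
      rotation_mult_inverse_rotation[OF cube, of "- sin t" "1 - cos t"] circle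
    by simp
qed

definition pt_form :: "complex^('a::finite \<times> 'b::finite)^('a \<times> 'b) \<Rightarrow> complex^('a \<times> 'b)^('a \<times> 'b) \<Rightarrow> complex"
  where "pt_form A B = trace (A ** partial_transpose2 (entry_conj B))"

lemma pt_form_expand:
  "pt_form A B = (\<Sum>p\<in>UNIV. \<Sum>q\<in>UNIV. A $ p $ q * cnj (B $ (fst q, snd p) $ (fst p, snd q)))"
  by (simp add: pt_form_def trace_def matrix_matrix_mult_def partial_transpose2_def)

lemma pt_form_add_left: "pt_form (A + B) C = pt_form A C + pt_form B C"
  by (simp add: pt_form_expand distrib_right sum.distrib)

lemma pt_form_add_right: "pt_form C (A + B) = pt_form C A + pt_form C B"
  by (simp add: pt_form_expand distrib_left sum.distrib)

lemma pt_form_scaleR_left: "pt_form (r *\<^sub>R A) C = of_real r * pt_form A C"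
  by (simp add: pt_form_expand scaleR_conv_of_real[where 'a=complex] sum_distrib_left mult.assoc)

lemma pt_form_scaleR_right: "pt_form C (r *\<^sub>R A) = of_real r * pt_form C A"
  by (simp add: pt_form_expand scaleR_conv_of_real[where 'a=complex] sum_distrib_left mult_ac)

lemma cnj_pt_form: "cnj (pt_form A B) = pt_form B A"
proof -
  let ?swap = "\<lambda>(p::'a \<times> 'b, q::'a \<times> 'b). ((fst q, snd p), (fst p, snd q))"
  have "cnj (pt_form A B) = (\<Sum>x\<in>UNIV. cnj (A $ fst x $ snd x) * B $ (fst (snd x), snd (fst x)) $ (fst (fst x), snd (snd x)))"
    by (simp add: pt_form_expand sum.cartesian_product split_def)
  also have "\<dots> = (\<Sum>x\<in>UNIV. B $ fst x $ snd x * cnj (A $ (fst (snd x), snd (fst x)) $ (fst (fst x), snd (snd x))))"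
    by (rule sum.reindex_bij_witness[where i="?swap" and j="?swap"]) (auto simp: mult.commute)
  also have "\<dots> = pt_form B A"
    by (simp add: pt_form_expand sum.cartesian_product split_def)
  finally show ?thesis .
qed

lemma Re_pt_form_commute: "Re (pt_form A B) = Re (pt_form B A)"
  by (subst cnj_pt_form[symmetric]) simp

lemma Re_pt_form_quadratic:
  "Re (pt_form (U + s *\<^sub>R A + c *\<^sub>R B) (U + s *\<^sub>R A + c *\<^sub>R B)) =
    Re (pt_form U U) + 2 * s * Re (pt_form A U) + 2 * c * Re (pt_form B U) + s\<^sup>2 * Re (pt_form A A)
    + 2 * s * c * Re (pt_form A B) + c\<^sup>2 * Re (pt_form B B)"
proof -
  have "Re (pt_form U A) = Re (pt_form A U)" "Re (pt_form U B) = Re (pt_form B U)"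
    "Re (pt_form B A) = Re (pt_form A B)"
    by (rule Re_pt_form_commute)+
  then show ?thesis
    unfolding pt_form_add_left pt_form_add_right pt_form_scaleR_left pt_form_scaleR_right
    by (simp add: power2_eq_square algebra_simps)
qed

lemma objective_pt_form: "objective V = Re (pt_form V V) / (real CARD('a) * real CARD('b))"
  for V :: "complex^('a::finite \<times> 'b::finite)^('a \<times> 'b)"
  by (simp add: objective_def pt_form_def)

lemma minimizer_Re_trace_skew_mult_eq_0:
  fixes U X :: "complex^('a::finite \<times> 'b::finite)^('a \<times> 'b)"
  assumes unitary: "unitary_mat U"
    and minimal: "\<forall>V :: complex^('a \<times> 'b)^('a \<times> 'b). unitary_mat V \<longrightarrow> objective U \<le> objective V"
    and skew: "conj_transpose X = - X" and cube: "X ** X ** X = - X"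
  shows "Re (trace (X ** (U ** partial_transpose2 (entry_conj U)))) = 0"
proof -
  define A where "A = X ** U"
  define B where "B = X ** X ** U"
  \<comment> \<open>\<open>d\<^sub>1 d\<^sub>2\<close> times the increase of the objective along \<open>exp(tX) U\<close>\<close>
  define g where "g t = 2 * sin t * Re (pt_form A U) + 2 * (1 - cos t) * Re (pt_form B U)
      + (sin t)\<^sup>2 * Re (pt_form A A) + 2 * sin t * (1 - cos t) * Re (pt_form A B)
      + (1 - cos t)\<^sup>2 * Re (pt_form B B)" for t :: real
  have "g 0 \<le> g t" for t
  proof -
    let ?V = "(mat 1 + sin t *\<^sub>R X + (1 - cos t) *\<^sub>R (X ** X)) ** U"
    have "?V = U + sin t *\<^sub>R A + (1 - cos t) *\<^sub>R B"
      by (simp add: A_def B_def matrix_add_rdistrib scalar_matrix_assoc[symmetric])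
    moreover have "objective U \<le> objective ?V"
      using minimal unitary_mat_mult[OF unitary_mat_rotation[OF skew cube] unitary] by blast
    ultimately have "Re (pt_form U U) \<le> Re (pt_form (U + sin t *\<^sub>R A + (1 - cos t) *\<^sub>R B)
        (U + sin t *\<^sub>R A + (1 - cos t) *\<^sub>R B))"
      by (simp add: objective_pt_form divide_le_cancel)
    then show ?thesis
      unfolding Re_pt_form_quadratic by (simp add: g_def)
  qed
  moreover have "(g has_real_derivative 2 * Re (pt_form A U)) (at 0)"
    unfolding g_def by (rule derivative_eq_intros refl | simp)+
  ultimately have "2 * Re (pt_form A U) = 0"
    by (intro DERIV_local_min[where d=1]) auto
  then show ?thesis
    by (simp add: A_def pt_form_def matrix_mul_assoc)
qed

definition skew_unit_mat :: "'n \<Rightarrow> 'n \<Rightarrow> complex \<Rightarrow> complex^'n^'n" where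
  "skew_unit_mat p q a = (\<chi> i j. (if j = q then if i = p then a else 0 else 0)
     - (if j = p then if i = q then cnj a else 0 else 0))"

definition imag_unit_mat :: "'n \<Rightarrow> complex^'n^'n" where
  "imag_unit_mat p = (\<chi> i j. if j = p then if i = p then \<i> else 0 else 0)"

lemma conj_transpose_skew_unit_mat: "conj_transpose (skew_unit_mat p q a) = - skew_unit_mat p q a"
  by (auto simp: vec_eq_iff skew_unit_mat_def)

lemma conj_transpose_imag_unit_mat: "conj_transpose (imag_unit_mat p) = - imag_unit_mat p"
  by (auto simp: vec_eq_iff imag_unit_mat_def)

lemma sum_if_eq_times_left:
  fixes f g :: "'n::finite \<Rightarrow> 'a::semiring_0"
  shows "(\<Sum>k\<in>UNIV. (if k = q then f k else 0) * g k) = f q * g q"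
  by (subst sum.cong[OF refl, of _ _ "\<lambda>k. if k = q then f k * g k else 0"]) auto

lemma sum_if_eq_times_right:
  fixes f g :: "'n::finite \<Rightarrow> 'a::semiring_0"
  shows "(\<Sum>k\<in>UNIV. g k * (if k = q then f k else 0)) = g q * f q"
  by (subst sum.cong[OF refl, of _ _ "\<lambda>k. if k = q then g k * f k else 0"]) auto

lemma skew_unit_mat_cube:
  fixes p q :: "'n::finite"
  assumes "p \<noteq> q" and "a * cnj a = 1"
  shows "skew_unit_mat p q a ** skew_unit_mat p q a ** skew_unit_mat p q a = - skew_unit_mat p q a"
proof -
  have "skew_unit_mat p q a ** skew_unit_mat p q a
      = - (\<chi> i j. (if j = p then if i = p then 1 else 0 else 0) + (if j = q then if i = q then 1 else 0 else 0))"
    using assms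
    by (auto simp: vec_eq_iff skew_unit_mat_def matrix_matrix_mult_def left_diff_distrib right_diff_distrib
        sum_subtractf sum_if_eq_times_left sum_if_eq_times_right mult.commute)
  then show ?thesis
    using assms
    by (auto simp: vec_eq_iff skew_unit_mat_def matrix_matrix_mult_def distrib_left distrib_right
        sum.distrib sum_negf sum_if_eq_times_left sum_if_eq_times_right)
qed

lemma imag_unit_mat_cube: "imag_unit_mat p ** imag_unit_mat p ** imag_unit_mat p = - imag_unit_mat (p::'n::finite)"
proof -
  have "imag_unit_mat p ** imag_unit_mat p = - (\<chi> i j. if j = p then if i = p then 1 else 0 else 0)"
    by (auto simp: vec_eq_iff imag_unit_mat_def matrix_matrix_mult_def sum_if_eq_times_left sum_if_eq_times_right)
  then show ?thesis
    by (auto simp: vec_eq_iff imag_unit_mat_def matrix_matrix_mult_def sum_negf sum_if_eq_times_left sum_if_eq_times_right)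
qed

lemma trace_skew_unit_mat_mult: "trace (skew_unit_mat p q a ** W) = a * W $ q $ p - cnj a * W $ p $ q"
  for W :: "complex^'n::finite^'n"
  by (simp add: trace_def skew_unit_mat_def matrix_matrix_mult_def left_diff_distrib sum_subtractf
      sum_if_eq_times_left sum_if_eq_times_right)

lemma trace_imag_unit_mat_mult: "trace (imag_unit_mat p ** W) = \<i> * W $ p $ p"
  for W :: "complex^'n::finite^'n"
  by (simp add: trace_def imag_unit_mat_def matrix_matrix_mult_def sum_if_eq_times_left sum_if_eq_times_right)

lemma hermitian_matI_Re_trace_skew_mult:
  fixes W :: "complex^'n::finite^'n"
  assumes "\<And>X. conj_transpose X = - X \<Longrightarrow> X ** X ** X = - X \<Longrightarrow> Re (trace (X ** W)) = 0"
  shows "hermitian_mat W"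
proof -
  have "cnj (W $ j $ i) = W $ i $ j" for i j
  proof (cases "i = j")
    case True
    have "Re (trace (imag_unit_mat i ** W)) = 0"
      by (rule assms[OF conj_transpose_imag_unit_mat imag_unit_mat_cube])
    then show ?thesis
      using True by (simp add: trace_imag_unit_mat_mult complex_eq_iff)
  next
    case False
    then have "j \<noteq> i" by simp
    then have "Re (trace (skew_unit_mat j i a ** W)) = 0" if "a * cnj a = 1" for a
      using that by (intro assms conj_transpose_skew_unit_mat skew_unit_mat_cube)
    from this[of 1] this[of \<i>] show ?thesis
      by (simp add: trace_skew_unit_mat_mult complex_eq_iff)
  qed
  then show ?thesis
    by (simp add: hermitian_mat_def vec_eq_iff)
qed

theorem proposition9:
  fixes U :: "complex^('a::finite \<times> 'b::finite)^('a \<times> 'b)"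
  assumes "odd CARD('a)"
    and "unitary_mat U"
    and "\<forall>V :: complex^('a \<times> 'b)^('a \<times> 'b). unitary_mat V \<longrightarrow> objective U \<le> objective V"
  shows "hermitian_mat (U ** partial_transpose2 (entry_conj U))"
  using minimizer_Re_trace_skew_mult_eq_0[OF assms(2,3)]
  by (rule hermitian_matI_Re_trace_skew_mult)

end
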